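(* Every betweenness algebra $\langle A,f,g\rangle$ is a weak betweenness algebra; in particular it satisfies (ABTW): for all $a\in A$, if $a\neq 0$ then $g(a,a)\leq a$.
   Context: A PS-algebra is $\langle A,f,g\rangle$ where $A$ is a Boolean algebra with at least two elements (operations $+,\cdot,-,0,1$) and $f,g\colon A^2\to A$ satisfy: $f(x,y)=0$ whenever $x=0$ or $y=0$; $f$ is additive in each argument ($f(x+x',y)=f(x,y)+f(x',y)$, $f(x,y+y')=f(x,y)+f(x,y')$); $g(x,y)=1$ whenever $x=0$ or $y=0$; $g$ is co-additive in each argument ($g(x+x',y)=g(x,y)\cdot g(x',y)$, $g(x,y+y')=g(x,y)\cdot g(x,y')$). A betweenness algebra is a PS-algebra satisfying, for all $x,y,z\in A$: (ABT0) $x\leq f(x,x)$; (ABT1$_f$) $f(x,y)\leq f(y,x)$; (ABT1$_g$) $g(x,y)\leq g(y,x)$; (ABT2) $y\cdot f(x,z)\leq f(x\cdot f(x,y),z)$; (ABT3) $f(x,g(x,-y)\cdot y)\leq y$; (wMIA) if $x\neq0$ and $y\neq0$ then $g(x,y)\leq f(x,y)$. A weak betweenness algebra is a PS-algebra satisfying (ABT0), (ABT1$_f$), (ABT1$_g$), (ABT2) and (ABTW): $a\neq0\Rightarrow g(a,a)\leq a$. *)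

theory Defs
  imports Main
begin

text \<open>Boolean algebras are modelled by Isabelle's type class boolean_algebra:
  sum is sup, product is inf, complement is uminus, 0 is bot, 1 is top.
  The requirement of at least two elements is expressed as bot \<noteq> top.\<close>

definition PS_algebra :: "('a::boolean_algebra \<Rightarrow> 'a \<Rightarrow> 'a) \<Rightarrow> ('a \<Rightarrow> 'a \<Rightarrow> 'a) \<Rightarrow> bool" where
  "PS_algebra f g \<longleftrightarrow>
     (bot::'a) \<noteq> top \<and>
     (\<forall>x y. (x = bot \<or> y = bot) \<longrightarrow> f x y = bot) \<and>
     (\<forall>x x' y. f (sup x x') y = sup (f x y) (f x' y)) \<and>
     (\<forall>x y y'. f x (sup y y') = sup (f x y) (f x y')) \<and>
     (\<forall>x y. (x = bot \<or> y = bot) \<longrightarrow> g x y = top) \<and>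
     (\<forall>x x' y. g (sup x x') y = inf (g x y) (g x' y)) \<and>
     (\<forall>x y y'. g x (sup y y') = inf (g x y) (g x y'))"

definition betweenness_algebra :: "('a::boolean_algebra \<Rightarrow> 'a \<Rightarrow> 'a) \<Rightarrow> ('a \<Rightarrow> 'a \<Rightarrow> 'a) \<Rightarrow> bool" where
  "betweenness_algebra f g \<longleftrightarrow>
     PS_algebra f g \<and>
     (\<forall>x. x \<le> f x x) \<and>
     (\<forall>x y. f x y \<le> f y x) \<and>
     (\<forall>x y. g x y \<le> g y x) \<and>
     (\<forall>x y z. inf y (f x z) \<le> f (inf x (f x y)) z) \<and>
     (\<forall>x y. f x (inf (g x (- y)) y) \<le> y) \<and>
     (\<forall>x y. x \<noteq> bot \<and> y \<noteq> bot \<longrightarrow> g x y \<le> f x y)"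

definition weak_betweenness_algebra :: "('a::boolean_algebra \<Rightarrow> 'a \<Rightarrow> 'a) \<Rightarrow> ('a \<Rightarrow> 'a \<Rightarrow> 'a) \<Rightarrow> bool" where
  "weak_betweenness_algebra f g \<longleftrightarrow>
     PS_algebra f g \<and>
     (\<forall>x. x \<le> f x x) \<and>
     (\<forall>x y. f x y \<le> f y x) \<and>
     (\<forall>x y. g x y \<le> g y x) \<and>
     (\<forall>x y z. inf y (f x z) \<le> f (inf x (f x y)) z) \<and>
     (\<forall>a. a \<noteq> bot \<longrightarrow> g a a \<le> a)"

end

theory Submission
  imports Defs
begin

text \<open>The part \<open>b = g(a,a) \<sqdot> -a\<close> of \<open>g(a,a)\<close> outside \<open>a\<close> is disjoint from \<open>f(a,a)\<close>:
  (ABT3) with \<open>y = -a\<close> puts \<open>f(a,b)\<close> below \<open>-a\<close>, and (ABT2) then bounds \<open>b \<sqdot> f(a,a)\<close> by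
  \<open>f(0,a) = 0\<close>. As (wMIA) gives \<open>b \<le> f(a,a)\<close>, \<open>b = 0\<close>.\<close>

lemma g_diag_le_self:
  fixes f g :: "'a::boolean_algebra \<Rightarrow> 'a \<Rightarrow> 'a"
  assumes f_bot_left: "\<And>y. f bot y = bot"
    and ABT2: "\<And>x y z. inf y (f x z) \<le> f (inf x (f x y)) z"
    and ABT3: "\<And>x y. f x (inf (g x (- y)) y) \<le> y"
    and g_le_f: "g a a \<le> f a a"
  shows "g a a \<le> a"
proof -
  define b where "b = inf (g a a) (- a)"
  have "f a b \<le> - a"
    using ABT3[of a "- a"] by (simp add: b_def)
  then have "inf a (f a b) = bot"
    by (metis inf_commute inf_shunt)
  then have "inf b (f a a) = bot"
    using ABT2[of b a a] f_bot_left by (simp add: bot_unique)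
  moreover have "b \<le> f a a"
    using g_le_f by (simp add: b_def le_infI1)
  ultimately have "b = bot"
    by (simp add: inf_absorb1)
  then show ?thesis
    by (simp add: b_def inf_shunt)
qed

theorem proposition26:
  fixes f g :: "'a::boolean_algebra \<Rightarrow> 'a \<Rightarrow> 'a"
  assumes "betweenness_algebra f g"
  shows "weak_betweenness_algebra f g"
proof -
  have f_bot_left: "f bot y = bot" for y
    using assms unfolding betweenness_algebra_def PS_algebra_def by simp
  have ABTW: "g a a \<le> a" if "a \<noteq> bot" for a
  proof (rule g_diag_le_self[where f = f and g = g, OF f_bot_left])
    show "inf y (f x z) \<le> f (inf x (f x y)) z" for x y z
      using assms unfolding betweenness_algebra_def by simp
    show "f x (inf (g x (- y)) y) \<le> y" for x y
      using assms unfolding betweenness_algebra_def by simp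
    show "g a a \<le> f a a"
      using assms that unfolding betweenness_algebra_def by simp
  qed
  then show ?thesis
    using assms unfolding betweenness_algebra_def weak_betweenness_algebra_def by blast
qed

end
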